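(* Let $L, e_i, e_j, e_h, e_w, e_v$ be mutually independent random variables, where $L, e_i, e_j, e_h, e_w$ are mean-zero Gaussian. For constants $a_i, a_j, a_h, a_w$ define $X_m = a_m L + e_m$ for $m \in \{i,j,h,w\}$. Let $f$ be a measurable function such that $V_i = f(X_i, e_v)$ has finite second moment. Then the tetrad constraints hold among $V_i, X_j, X_h, X_w$ for every partition into pairs: $$\mathrm{Cov}(V_i,X_j)\,\mathrm{Cov}(X_h,X_w) = \mathrm{Cov}(V_i,X_h)\,\mathrm{Cov}(X_j,X_w) = \mathrm{Cov}(V_i,X_w)\,\mathrm{Cov}(X_j,X_h).$$ In particular this holds when $X_i$ is standard Gaussian and $V_i$ is the binary variable with $V_i = 1$ if $X_i \ge S_i$ and $V_i = 0$ otherwise, for a constant $S_i$.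
   Context: This describes a pure 1-factor measurement model with a single latent common cause $L$ of the linear Gaussian indicators $X_i, X_j, X_h, X_w$, in which the indicator $X_i$ is replaced by a (possibly non-Gaussian, e.g. binary) variable $V_i$ that is a function of $X_i$ and an independent noise term $e_v$. *)

theory Defs
  imports "HOL-Probability.Probability"
begin

definition cov :: "'a measure \<Rightarrow> ('a \<Rightarrow> real) \<Rightarrow> ('a \<Rightarrow> real) \<Rightarrow> real" where
  "cov M X Y = (\<integral>\<omega>. (X \<omega> - (\<integral>\<eta>. X \<eta> \<partial>M)) * (Y \<omega> - (\<integral>\<eta>. Y \<eta> \<partial>M)) \<partial>M)"

definition centered_gaussian :: "'a measure \<Rightarrow> ('a \<Rightarrow> real) \<Rightarrow> bool" where
  "centered_gaussian M X \<longleftrightarrow> (\<exists>\<sigma>>0. distributed M lborel X (normal_density 0 \<sigma>))"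

definition tetrads :: "'a measure \<Rightarrow> ('a \<Rightarrow> real) \<Rightarrow> ('a \<Rightarrow> real) \<Rightarrow> ('a \<Rightarrow> real) \<Rightarrow> ('a \<Rightarrow> real) \<Rightarrow> bool" where
  "tetrads M V Xj Xh Xw \<longleftrightarrow>
     cov M V Xj * cov M Xh Xw = cov M V Xh * cov M Xj Xw \<and>
     cov M V Xh * cov M Xj Xw = cov M V Xw * cov M Xj Xh"

end

theory Submission
  imports Defs
begin

text \<open>
  Covariance is bilinear and vanishes on independent pairs. Since
  \<open>V\<^sub>i\<close> depends only on \<open>L, e\<^sub>i, e\<^sub>v\<close>, it is independent of \<open>e\<^sub>j, e\<^sub>h, e\<^sub>w\<close>, so
  \<open>Cov(V\<^sub>i, X\<^sub>m) = a\<^sub>m Cov(V\<^sub>i, L)\<close>; likewise \<open>Cov(X\<^sub>m, X\<^sub>n) = a\<^sub>m a\<^sub>n Var L\<close> for \<open>m \<noteq> n\<close>.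
  Hence every tetrad product equals \<open>a\<^sub>j a\<^sub>h a\<^sub>w Cov(V\<^sub>i, L) Var L\<close>.
\<close>

definition square_integrable :: "'a measure \<Rightarrow> ('a \<Rightarrow> real) \<Rightarrow> bool" where
  "square_integrable M X \<longleftrightarrow> X \<in> borel_measurable M \<and> integrable M (\<lambda>\<omega>. (X \<omega>)\<^sup>2)"

lemma abs_mult_le_sum_squares: "\<bar>x * y\<bar> \<le> x\<^sup>2 + y\<^sup>2" for x y :: real
proof -
  have "\<bar>x * y\<bar> \<le> 2 * \<bar>x\<bar> * \<bar>y\<bar>"
    by (simp add: abs_mult)
  also have "\<dots> \<le> \<bar>x\<bar>\<^sup>2 + \<bar>y\<bar>\<^sup>2"
    by (rule sum_squares_bound)
  finally show ?thesis
    by simp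
qed

lemma square_integrable_mult:
  assumes X: "square_integrable M X" and Y: "square_integrable M Y"
  shows "integrable M (\<lambda>\<omega>. X \<omega> * Y \<omega>)"
proof (rule Bochner_Integration.integrable_bound)
  show "integrable M (\<lambda>\<omega>. (X \<omega>)\<^sup>2 + (Y \<omega>)\<^sup>2)"
    using X Y by (simp add: square_integrable_def)
  show "(\<lambda>\<omega>. X \<omega> * Y \<omega>) \<in> borel_measurable M"
    using X Y by (auto simp: square_integrable_def)
  show "AE \<omega> in M. norm (X \<omega> * Y \<omega>) \<le> norm ((X \<omega>)\<^sup>2 + (Y \<omega>)\<^sup>2)"
    using abs_mult_le_sum_squares by auto
qed

lemma square_integrable_scaled_add:
  assumes X: "square_integrable M X" and Y: "square_integrable M Y"
  shows "square_integrable M (\<lambda>\<omega>. a * X \<omega> + Y \<omega>)"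
proof -
  have "(\<lambda>\<omega>. (a * X \<omega> + Y \<omega>)\<^sup>2) = (\<lambda>\<omega>. a\<^sup>2 * (X \<omega>)\<^sup>2 + 2 * a * (X \<omega> * Y \<omega>) + (Y \<omega>)\<^sup>2)"
    by (simp add: power2_eq_square algebra_simps)
  then show ?thesis
    using X Y square_integrable_mult[OF X Y] by (auto simp: square_integrable_def)
qed

lemma (in finite_measure) square_integrable_integrable:
  "square_integrable M X \<Longrightarrow> integrable M X"
  unfolding square_integrable_def by (blast intro: square_integrable_imp_integrable)

lemma centered_gaussian_square_integrable:
  assumes "centered_gaussian M X"
  shows "square_integrable M X"
proof -
  obtain \<sigma> where "\<sigma> > 0" and D: "distributed M lborel X (normal_density 0 \<sigma>)"
    using assms unfolding centered_gaussian_def by blast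
  then have "integrable M (\<lambda>\<omega>. (X \<omega>)\<^sup>2)"
    using distributed_integrable[OF D, of "\<lambda>x. x\<^sup>2"] integrable_normal_moment[of \<sigma> 0 2] by simp
  moreover have "X \<in> borel_measurable M"
    using distributed_measurable[OF D] by simp
  ultimately show ?thesis
    by (simp add: square_integrable_def)
qed

lemma cov_commute: "cov M X Y = cov M Y X"
  unfolding cov_def by (simp add: mult.commute)

context prob_space
begin

lemma cov_eq_expectation_mult_diff:
  assumes "integrable M X" "integrable M Y" "integrable M (\<lambda>\<omega>. X \<omega> * Y \<omega>)"
  shows "cov M X Y = expectation (\<lambda>\<omega>. X \<omega> * Y \<omega>) - expectation X * expectation Y"
proof -
  have "(\<lambda>\<omega>. (X \<omega> - expectation X) * (Y \<omega> - expectation Y)) =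
        (\<lambda>\<omega>. X \<omega> * Y \<omega> - expectation Y * X \<omega> - expectation X * Y \<omega> + expectation X * expectation Y)"
    by (simp add: algebra_simps)
  then show ?thesis
    unfolding cov_def using assms by (simp add: prob_space)
qed

lemma cov_scaled_add_right:
  assumes X: "square_integrable M X" and Y: "square_integrable M Y" and Z: "square_integrable M Z"
  shows "cov M X (\<lambda>\<omega>. a * Y \<omega> + Z \<omega>) = a * cov M X Y + cov M X Z"
proof -
  have int: "integrable M X" "integrable M Y" "integrable M Z"
    using X Y Z by (simp_all add: square_integrable_integrable)
  have int_mult: "integrable M (\<lambda>\<omega>. X \<omega> * Y \<omega>)" "integrable M (\<lambda>\<omega>. X \<omega> * Z \<omega>)"
    using square_integrable_mult X Y Z by blast+
  have "(\<lambda>\<omega>. X \<omega> * (a * Y \<omega> + Z \<omega>)) = (\<lambda>\<omega>. a * (X \<omega> * Y \<omega>) + X \<omega> * Z \<omega>)"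
    by (simp add: algebra_simps)
  then show ?thesis
    using int int_mult by (simp add: cov_eq_expectation_mult_diff algebra_simps)
qed

lemma cov_indep_eq_0:
  assumes "indep_var borel X borel Y" "integrable M X" "integrable M Y"
  shows "cov M X Y = 0"
  using assms
  by (simp add: cov_eq_expectation_mult_diff indep_var_integrable indep_var_lebesgue_integral)

lemma cov_add_indep_noise:
  assumes X: "square_integrable M X" and L: "square_integrable M L" and e: "square_integrable M e"
    and indep: "indep_var borel X borel e"
  shows "cov M X (\<lambda>\<omega>. a * L \<omega> + e \<omega>) = a * cov M X L"
  using cov_scaled_add_right[OF X L e] cov_indep_eq_0[OF indep] X e
  by (simp add: square_integrable_integrable)

lemma cov_common_factor:
  assumes L: "square_integrable M L" and e: "square_integrable M e" and e': "square_integrable M e'"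
    and indep: "indep_var borel L borel e" "indep_var borel L borel e'" "indep_var borel e borel e'"
  shows "cov M (\<lambda>\<omega>. a * L \<omega> + e \<omega>) (\<lambda>\<omega>. b * L \<omega> + e' \<omega>) = a * b * cov M L L"
proof -
  let ?X = "\<lambda>\<omega>. a * L \<omega> + e \<omega>"
  have X: "square_integrable M ?X"
    using L e by (rule square_integrable_scaled_add)
  have "cov M ?X L = a * cov M L L"
    using cov_add_indep_noise[OF L L e indep(1)] by (simp add: cov_commute)
  moreover have "cov M ?X e' = 0"
    using cov_scaled_add_right[OF e' L e] indep L e e'
    by (simp add: cov_commute cov_indep_eq_0 square_integrable_integrable)
  ultimately show ?thesis
    using cov_scaled_add_right[OF X L e'] by simp
qed

lemma tetrads_one_factor:
  assumes V: "square_integrable M V" and L: "square_integrable M L"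
    and ej: "square_integrable M ej" and eh: "square_integrable M eh" and ew: "square_integrable M ew"
    and indep_V: "indep_var borel V borel ej" "indep_var borel V borel eh" "indep_var borel V borel ew"
    and indep_L: "indep_var borel L borel ej" "indep_var borel L borel eh" "indep_var borel L borel ew"
    and indep_e: "indep_var borel ej borel eh" "indep_var borel ej borel ew" "indep_var borel eh borel ew"
  shows "tetrads M V (\<lambda>\<omega>. aj * L \<omega> + ej \<omega>) (\<lambda>\<omega>. ah * L \<omega> + eh \<omega>) (\<lambda>\<omega>. aw * L \<omega> + ew \<omega>)"
proof -
  note cov_V = cov_add_indep_noise[OF V L]
  note cov_X = cov_common_factor[OF L]
  show ?thesis
    unfolding tetrads_def
      cov_V[OF ej indep_V(1)] cov_V[OF eh indep_V(2)] cov_V[OF ew indep_V(3)]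
      cov_X[OF ej eh indep_L(1,2) indep_e(1)] cov_X[OF ej ew indep_L(1,3) indep_e(2)]
      cov_X[OF eh ew indep_L(2,3) indep_e(3)]
    by (simp add: algebra_simps)
qed

lemma indep_var_fun_of_subfamily:
  assumes indep: "indep_vars M' Y I"
    and h: "h \<in> measurable (PiM A M') N" and "A \<subseteq> I" "m \<in> I" "m \<notin> A"
  shows "indep_var N (\<lambda>\<omega>. h (restrict (\<lambda>i. Y i \<omega>) A)) (M' m) (Y m)"
proof -
  have "indep_var (PiM A M') (\<lambda>\<omega>. restrict (\<lambda>i. Y i \<omega>) A) (PiM {m} M') (\<lambda>\<omega>. restrict (\<lambda>i. Y i \<omega>) {m})"
    using assms by (intro indep_var_restrict[OF indep]) auto
  then have "indep_var N (h \<circ> (\<lambda>\<omega>. restrict (\<lambda>i. Y i \<omega>) A)) (M' m) ((\<lambda>x. x m) \<circ> (\<lambda>\<omega>. restrict (\<lambda>i. Y i \<omega>) {m}))"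
    by (rule indep_var_compose) (use h in auto)
  then show ?thesis
    by (simp add: comp_def)
qed

lemma indep_vars_imp_indep_var:
  assumes "indep_vars M' Y I" "p \<in> I" "m \<in> I" "p \<noteq> m"
  shows "indep_var (M' p) (Y p) (M' m) (Y m)"
  using indep_var_fun_of_subfamily[OF assms(1), of "\<lambda>x. x p" "{p}"] assms by (simp add: restrict_def)

lemma tetrads_one_factor_measurement:
  fixes L ei ej eh ew ev :: "'a \<Rightarrow> real" and f :: "real \<Rightarrow> real \<Rightarrow> real"
  assumes indep: "indep_vars (\<lambda>_. borel) (\<lambda>k. [L, ei, ej, eh, ew, ev] ! k) {0..<6}"
    and sq: "square_integrable M L" "square_integrable M ej" "square_integrable M eh" "square_integrable M ew"
    and f: "(\<lambda>(x, y). f x y) \<in> borel_measurable (borel \<Otimes>\<^sub>M borel)"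
    and V2: "integrable M (\<lambda>\<omega>. (f (ai * L \<omega> + ei \<omega>) (ev \<omega>))\<^sup>2)"
  shows "tetrads M (\<lambda>\<omega>. f (ai * L \<omega> + ei \<omega>) (ev \<omega>))
           (\<lambda>\<omega>. aj * L \<omega> + ej \<omega>) (\<lambda>\<omega>. ah * L \<omega> + eh \<omega>) (\<lambda>\<omega>. aw * L \<omega> + ew \<omega>)"
proof -
  let ?Y = "\<lambda>k. [L, ei, ej, eh, ew, ev] ! k"
  let ?h = "\<lambda>x :: nat \<Rightarrow> real. f (ai * x 0 + x 1) (x 5)"
  have "(\<lambda>x :: nat \<Rightarrow> real. (ai * x 0 + x 1, x 5)) \<in> measurable (PiM {0, 1, 5} (\<lambda>_. borel)) (borel \<Otimes>\<^sub>M borel)"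
    by measurable
  from measurable_compose[OF this f]
  have h: "?h \<in> borel_measurable (PiM {0, 1, 5} (\<lambda>_. borel))"
    by simp
  have indep_V: "indep_var borel (\<lambda>\<omega>. ?h (restrict (\<lambda>i. ?Y i \<omega>) {0, 1, 5})) borel (?Y m)"
    if "m \<in> {2, 3, 4}" for m
    using that by (intro indep_var_fun_of_subfamily[OF indep h]) auto
  have indep_pair: "indep_var borel (?Y p) borel (?Y m)"
    if "p \<in> {0..<6}" "m \<in> {0..<6}" "p \<noteq> m" for p m
    using indep_vars_imp_indep_var[OF indep that] .
  have "(\<lambda>\<omega>. ?h (restrict (\<lambda>i. ?Y i \<omega>) {0, 1, 5})) \<in> borel_measurable M"
    using indep unfolding indep_vars_def by (intro measurable_compose[OF _ h] measurable_restrict) auto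
  then have V: "square_integrable M (\<lambda>\<omega>. f (ai * L \<omega> + ei \<omega>) (ev \<omega>))"
    using V2 by (simp add: square_integrable_def)
  show ?thesis
    by (rule tetrads_one_factor[OF V sq])
      (use indep_V[of 2] indep_V[of 3] indep_V[of 4] indep_pair[of 0 2] indep_pair[of 0 3]
        indep_pair[of 0 4] indep_pair[of 2 3] indep_pair[of 2 4] indep_pair[of 3 4] in simp_all)
qed

end

theorem mainTheorem1:
  fixes M :: "'a measure"
    and L ei ej eh ew ev :: "'a \<Rightarrow> real"
    and ai aj ah aw :: real
    and f :: "real \<Rightarrow> real \<Rightarrow> real"
  assumes "prob_space M"
    and indep: "prob_space.indep_vars M (\<lambda>_. borel) (\<lambda>k. [L, ei, ej, eh, ew, ev] ! k) {0..<6}"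
    and gL: "centered_gaussian M L"
    and gi: "centered_gaussian M ei"
    and gj: "centered_gaussian M ej"
    and gh: "centered_gaussian M eh"
    and gw: "centered_gaussian M ew"
    and f_meas: "(\<lambda>(x, y). f x y) \<in> borel_measurable (borel \<Otimes>\<^sub>M borel)"
    and V2: "integrable M (\<lambda>\<omega>. (f (ai * L \<omega> + ei \<omega>) (ev \<omega>))\<^sup>2)"
  shows "tetrads M (\<lambda>\<omega>. f (ai * L \<omega> + ei \<omega>) (ev \<omega>))
            (\<lambda>\<omega>. aj * L \<omega> + ej \<omega>) (\<lambda>\<omega>. ah * L \<omega> + eh \<omega>) (\<lambda>\<omega>. aw * L \<omega> + ew \<omega>)
       \<and> (\<forall>S::real. tetrads M
            (\<lambda>\<omega>. if ai * L \<omega> + ei \<omega> \<ge> S then 1 else 0)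
            (\<lambda>\<omega>. aj * L \<omega> + ej \<omega>) (\<lambda>\<omega>. ah * L \<omega> + eh \<omega>) (\<lambda>\<omega>. aw * L \<omega> + ew \<omega>))"
proof -
  interpret prob_space M by fact
  note tetrads = tetrads_one_factor_measurement[OF indep centered_gaussian_square_integrable[OF gL]
      centered_gaussian_square_integrable[OF gj] centered_gaussian_square_integrable[OF gh]
      centered_gaussian_square_integrable[OF gw]]
  have "tetrads M (\<lambda>\<omega>. if ai * L \<omega> + ei \<omega> \<ge> S then 1 else 0)
          (\<lambda>\<omega>. aj * L \<omega> + ej \<omega>) (\<lambda>\<omega>. ah * L \<omega> + eh \<omega>) (\<lambda>\<omega>. aw * L \<omega> + ew \<omega>)" for S
  proof (rule tetrads[where f = "\<lambda>x y. if S \<le> x then 1 else 0"])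
    show "(\<lambda>(x, y). if S \<le> x then 1 else 0 :: real) \<in> borel_measurable (borel \<Otimes>\<^sub>M borel)"
      by measurable
    have "L \<in> borel_measurable M" "ei \<in> borel_measurable M"
      using gL gi by (simp_all add: centered_gaussian_square_integrable[unfolded square_integrable_def])
    then show "integrable M (\<lambda>\<omega>. (if S \<le> ai * L \<omega> + ei \<omega> then 1 else 0 :: real)\<^sup>2)"
      by (intro integrable_const_bound[where B = 1]) auto
  qed
  then show ?thesis
    using tetrads[OF f_meas V2] by blast
qed

end
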